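(* Fix $\varepsilon>0$. Under (C1)–(C4), for every $z\in\mathbb C\setminus\overline D$ the equations $1-\mathrm{tr}_nG(z,x^2)=\varepsilon/x$ and $1-\int(\lambda+x^2)^{-1}d\nu_z(\lambda)=\varepsilon/x$ each have exactly one positive root, while $\int(\lambda+x^2)^{-1}d\nu_z(\lambda)=1$ has no nonnegative root. Moreover, for every compact $E_{out}\subset\mathbb C\setminus\overline D$ there is $n_0=n_0(E_{out})$ such that for $n\ge n_0$ and $z\in E_{out}$ the equation $\mathrm{tr}_nG(z,x^2)=1$ has no nonnegative root.
   Context: $A_n$ is an $n\times n$ matrix (deterministic, or random and then statements hold almost surely for large $n$); $\mathrm{tr}_n=n^{-1}\mathrm{Tr}$; $Y_0(z)=(A_n-z)(A_n-z)^*$; $G(z,x)=(Y_0(z)+x)^{-1}$ (for $x=0$ meaning $Y_0(z)^{-1}$). (C1) The empirical eigenvalue measure $\nu_{n,z}$ of $Y_0(z)$ converges weakly to a deterministic $\nu_z$ for a.e. $z$. (C2) $\exists M,d>0$: $\mathbb P\{n^{-1}\sum|a_{ij}|^2<M\}\ge1-n^{-1-d}$. (C3) With $\sigma_0=\{z:0\in\operatorname{supp}\nu_z\}$, $\sigma_\epsilon$ its $\epsilon$-neighbourhood: fixed $d_0>0$, some $d>0$, for every $\epsilon>0$ some $C(\epsilon)$ with $\mathbb P\{\sup_{z\notin\sigma_\epsilon}|\mathrm{tr}_nY_0(z)^{-1}-\int\lambda^{-1}d\nu_z|<C(\epsilon)n^{-d_0}\}>1-n^{-1-d}$. (C4) $\exists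 d_1,\varrho_0,\epsilon_0,d>0$: $\mathbb P\{\inf_{z\in\sigma_{\epsilon_0}}\mathrm{tr}_n(Y_0(z)+\varrho_0^2)^{-1}>1+d_1\}>1-n^{-1-d}$. $D=\sigma_0\cup\{z\notin\sigma_0:\int\lambda^{-1}d\nu_z\ge1\}$. *)

theory Defs
  imports "HOL-Probability.Probability"
    "Jordan_Normal_Form.Char_Poly"
    "Jordan_Normal_Form.Schur_Decomposition"
    "Jordan_Normal_Form.Gauss_Jordan_Elimination"
begin

definition trn :: "complex mat \<Rightarrow> complex" where
  "trn B = (\<Sum>i<dim_row B. B $$ (i, i)) / of_nat (dim_row B)"

definition Y0 :: "complex mat \<Rightarrow> complex \<Rightarrow> complex mat" where
  "Y0 A z = (let B = A - z \<cdot>\<^sub>m 1\<^sub>m (dim_row A) in B * mat_adjoint B)"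

text \<open>G(z,x) = (Y_0(z) + x)^{-1} (matrix inverse; only meaningful when invertible).\<close>
definition G :: "complex mat \<Rightarrow> complex \<Rightarrow> real \<Rightarrow> complex mat" where
  "G A z x = the (mat_inverse (Y0 A z + complex_of_real x \<cdot>\<^sub>m 1\<^sub>m (dim_row A)))"

text \<open>Empirical eigenvalue measure of Y_0(z): uniform distribution on the eigenvalues
  (roots of the characteristic polynomial, with multiplicity); they are real since Y_0 is Hermitian.\<close>
definition emp_meas :: "complex mat \<Rightarrow> complex \<Rightarrow> real measure" where
  "emp_meas A z = measure_pmf (map_pmf Re (pmf_of_multiset (proots (char_poly (Y0 A z)))))"

definition msupp :: "real measure \<Rightarrow> real set" where
  "msupp \<mu> = {x. \<forall>e>0. 0 < measure \<mu> (ball x e)}"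

definition sigma0 :: "(complex \<Rightarrow> real measure) \<Rightarrow> complex set" where
  "sigma0 nu = {z. 0 \<in> msupp (nu z)}"

definition sigma_nbhd :: "(complex \<Rightarrow> real measure) \<Rightarrow> real \<Rightarrow> complex set" where
  "sigma_nbhd nu e = {z. \<exists>w\<in>sigma0 nu. dist z w < e}"

definition Dset :: "(complex \<Rightarrow> real measure) \<Rightarrow> complex set" where
  "Dset nu = sigma0 nu \<union> {z. z \<notin> sigma0 nu \<and> (\<integral>l. 1 / l \<partial>nu z) \<ge> 1}"

end

theory Submission
  imports Defs
begin

text \<open>
  Write \<open>\<phi>(s) = \<integral> (\<lambda> + s)\<inverse> d\<mu>(\<lambda>)\<close> for \<open>\<mu>\<close> either the eigenvalue distribution of
  \<open>Y\<^sub>0(z) = (A - z)(A - z)\<^sup>*\<close> (Schur triangularisation shows \<open>tr\<^sub>n G(z,s) = \<phi>(s)\<close>, and the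
  eigenvalues of \<open>Y\<^sub>0(z)\<close> are \<open>\<ge> 0\<close>) or the limit measure \<open>\<nu>\<^sub>z\<close>, whose support stays away from \<open>0\<close>
  when \<open>z \<notin> \<sigma>\<^sub>0\<close>. In both cases \<open>\<phi>\<close> is continuous, nonnegative, decreasing and \<open>\<le> 1/s\<close>, so
  \<open>h(x) = x(1 - \<phi>(x\<^sup>2))\<close> runs from below \<open>\<epsilon>\<close> to above \<open>\<epsilon>\<close> and is strictly increasing where it
  is positive: \<open>h(x) = \<epsilon>\<close> has exactly one positive root. Outside \<open>D\<close> we have \<open>\<phi>(x\<^sup>2) \<le> \<phi>(0) < 1\<close>.
  For a compact \<open>E\<close> outside \<open>D\<close>, (C3) and Borel--Cantelli make \<open>tr\<^sub>n Y\<^sub>0(z)\<inverse>\<close> converge uniformly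
  on \<open>E\<close> almost surely; these functions are continuous (cofactor formula), so the limit
  \<open>\<integral> \<lambda>\<inverse> d\<nu>\<^sub>z\<close> is continuous on \<open>E\<close> with maximum \<open>< 1\<close>, and eventually
  \<open>tr\<^sub>n G(z,x\<^sup>2) \<le> tr\<^sub>n Y\<^sub>0(z)\<inverse> < 1\<close> uniformly on \<open>E\<close>.
\<close>

no_notation Finite_Cartesian_Product.vec_nth (infixl "$" 90)

lemma carrier_mat_adjoint: "B \<in> carrier_mat n m \<Longrightarrow> mat_adjoint B \<in> carrier_mat m n"
  unfolding mat_adjoint_def by auto

lemma index_mat_adjoint:
  "B \<in> carrier_mat n m \<Longrightarrow> i < m \<Longrightarrow> j < n \<Longrightarrow> mat_adjoint B $$ (i, j) = cnj (B $$ (j, i))"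
  unfolding mat_adjoint_def by (auto simp: mat_of_rows_def)

lemma index_mult_adjoint:
  assumes "B \<in> carrier_mat n m" "i < n" "j < n"
  shows "(B * mat_adjoint B) $$ (i, j) = (\<Sum>k<m. B $$ (i, k) * cnj (B $$ (j, k)))"
  using assms carrier_mat_adjoint[OF assms(1)] index_mat_adjoint[OF assms(1)]
  by (auto simp: scalar_prod_def lessThan_atLeast0 intro!: sum.cong)

lemma index_mult_mat_vec_sum:
  "Y \<in> carrier_mat n n \<Longrightarrow> w \<in> carrier_vec n \<Longrightarrow> i < n \<Longrightarrow>
    (Y *\<^sub>v w) $ i = (\<Sum>j<n. Y $$ (i, j) * w $ j)"
  by (auto simp: scalar_prod_def lessThan_atLeast0 intro!: sum.cong)

lemma quadratic_form_mult_adjoint: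
  assumes B: "B \<in> carrier_mat n n" and w: "w \<in> carrier_vec n"
  shows "(\<Sum>i<n. cnj (w $ i) * ((B * mat_adjoint B) *\<^sub>v w) $ i)
     = of_real (\<Sum>k<n. (cmod (\<Sum>i<n. cnj (w $ i) * B $$ (i, k)))\<^sup>2)"
proof -
  have Y: "B * mat_adjoint B \<in> carrier_mat n n"
    using B carrier_mat_adjoint by (metis mult_carrier_mat)
  have "(\<Sum>i<n. cnj (w $ i) * ((B * mat_adjoint B) *\<^sub>v w) $ i)
     = (\<Sum>i<n. \<Sum>j<n. \<Sum>k<n. cnj (w $ i) * B $$ (i, k) * (cnj (B $$ (j, k)) * w $ j))"
    using Y w by (simp add: index_mult_mat_vec_sum index_mult_adjoint[OF B]
        sum_distrib_left sum_distrib_right mult_ac)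
  also have "\<dots> = (\<Sum>k<n. \<Sum>i<n. \<Sum>j<n. cnj (w $ i) * B $$ (i, k) * (cnj (B $$ (j, k)) * w $ j))"
    by (subst sum.swap) (rule sum.cong[OF refl], rule sum.swap)
  also have "\<dots> = (\<Sum>k<n. (\<Sum>i<n. cnj (w $ i) * B $$ (i, k)) * cnj (\<Sum>i<n. cnj (w $ i) * B $$ (i, k)))"
    by (simp add: sum_distrib_left sum_distrib_right mult_ac)
  also have "\<dots> = of_real (\<Sum>k<n. (cmod (\<Sum>i<n. cnj (w $ i) * B $$ (i, k)))\<^sup>2)"
    unfolding of_real_sum by (rule sum.cong, simp, rule complex_norm_square[symmetric])
  finally show ?thesis .
qed

lemma eigenvalue_mult_adjoint_nonneg:
  assumes B: "B \<in> carrier_mat n n" and ev: "eigenvalue (B * mat_adjoint B) l"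
  shows "l = of_real (Re l) \<and> 0 \<le> Re l"
proof -
  have Y: "B * mat_adjoint B \<in> carrier_mat n n"
    using B carrier_mat_adjoint by (metis mult_carrier_mat)
  obtain w where w: "w \<in> carrier_vec n" "w \<noteq> 0\<^sub>v n" "(B * mat_adjoint B) *\<^sub>v w = l \<cdot>\<^sub>v w"
    using ev Y unfolding eigenvalue_def eigenvector_def by auto
  define R where "R = (\<Sum>k<n. (cmod (\<Sum>i<n. cnj (w $ i) * B $$ (i, k)))\<^sup>2)"
  define N where "N = (\<Sum>i<n. (cmod (w $ i))\<^sup>2)"
  obtain i0 where i0: "i0 < n" "w $ i0 \<noteq> 0"
    using w(1,2) by (auto simp: vec_eq_iff)
  have "(cmod (w $ i0))\<^sup>2 \<le> N"
    unfolding N_def by (rule member_le_sum) (use i0 in auto)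
  with i0 have N: "0 < N" by (smt (verit) norm_eq_zero zero_less_power2)
  have "of_real R = (\<Sum>i<n. cnj (w $ i) * ((B * mat_adjoint B) *\<^sub>v w) $ i)"
    unfolding R_def by (rule quadratic_form_mult_adjoint[symmetric, OF B w(1)])
  also have "\<dots> = l * (\<Sum>i<n. w $ i * cnj (w $ i))"
    using w by (simp add: sum_distrib_left mult_ac)
  also have "\<dots> = l * of_real N"
    unfolding N_def of_real_sum
    by (rule arg_cong[where f="\<lambda>x. l * x"], rule sum.cong, simp, rule complex_norm_square[symmetric])
  finally have "l = of_real (R / N)" using N by (simp add: field_simps)
  moreover have "0 \<le> R" unfolding R_def by (auto intro: sum_nonneg)
  ultimately show ?thesis using N by simp
qed

lemma Y0_carrier: "A \<in> carrier_mat n n \<Longrightarrow> Y0 A z \<in> carrier_mat n n"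
  unfolding Y0_def Let_def using carrier_mat_adjoint
  by (metis carrier_matD(1) minus_carrier_mat mult_carrier_mat one_carrier_mat smult_carrier_mat)

lemma eigenvalue_Y0_nonneg:
  "A \<in> carrier_mat n n \<Longrightarrow> eigenvalue (Y0 A z) l \<Longrightarrow> l = of_real (Re l) \<and> 0 \<le> Re l"
  unfolding Y0_def Let_def by (rule eigenvalue_mult_adjoint_nonneg) auto

lemma sum_lessThan_single:
  "j < (n::nat) \<Longrightarrow> (\<And>k. k < n \<Longrightarrow> k \<noteq> j \<Longrightarrow> f k = 0) \<Longrightarrow>
    (\<Sum>k<n. f k) = (f j :: 'a::comm_monoid_add)"
  by (subst sum.mono_neutral_right[of "{..<n}" "{j}"]) auto

lemma upper_triangular_left_inverse_diag:
  fixes U V :: "'a::field mat"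
  assumes U: "U \<in> carrier_mat n n" and ut: "upper_triangular U"
    and nz: "\<And>i. i < n \<Longrightarrow> U $$ (i, i) \<noteq> 0"
    and V: "V \<in> carrier_mat n n" and VU: "V * U = 1\<^sub>m n" and i: "i < n"
  shows "V $$ (i, i) = 1 / U $$ (i, i)"
proof -
  have VU_index: "(V * U) $$ (i, j) = (\<Sum>k<n. V $$ (i, k) * U $$ (k, j))" if "i < n" "j < n" for i j
    using V U that by (auto simp: scalar_prod_def lessThan_atLeast0 intro!: sum.cong)
  have lower: "V $$ (i, j) = 0" if "j < i" "i < n" for i j
    using that
  proof (induction j arbitrary: i rule: less_induct)
    case (less j)
    have "j < n" using less by simp
    have "0 = (V * U) $$ (i, j)" using VU less by simp
    also have "\<dots> = V $$ (i, j) * U $$ (j, j)"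
      unfolding VU_index[OF less(3) \<open>j < n\<close>]
    proof (rule sum_lessThan_single[OF \<open>j < n\<close>])
      fix k assume k: "k < n" "k \<noteq> j"
      show "V $$ (i, k) * U $$ (k, j) = 0"
      proof (cases "k < j")
        case True then show ?thesis using less k by auto
      next
        case False then show ?thesis using upper_triangularD[OF ut, of j k] k U by auto
      qed
    qed
    finally show ?case using nz[OF \<open>j < n\<close>] by simp
  qed
  have "1 = (V * U) $$ (i, i)" using VU i by simp
  also have "\<dots> = V $$ (i, i) * U $$ (i, i)"
    unfolding VU_index[OF i i]
  proof (rule sum_lessThan_single[OF i])
    fix k assume k: "k < n" "k \<noteq> i"
    show "V $$ (i, k) * U $$ (k, i) = 0"
      using lower[of k i] upper_triangularD[OF ut, of i k] k i U by (cases "k < i") auto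
  qed
  finally show ?thesis using nz[OF i] by (simp add: field_simps)
qed

lemma trace_mult_comm:
  fixes A B :: "'a::comm_semiring_0 mat"
  assumes A: "A \<in> carrier_mat n m" and B: "B \<in> carrier_mat m n"
  shows "(\<Sum>i<n. (A * B) $$ (i, i)) = (\<Sum>j<m. (B * A) $$ (j, j))"
proof -
  have "(\<Sum>i<n. (A * B) $$ (i, i)) = (\<Sum>i<n. \<Sum>j<m. A $$ (i, j) * B $$ (j, i))"
    using A B by (auto simp: scalar_prod_def lessThan_atLeast0 intro!: sum.cong)
  also have "\<dots> = (\<Sum>j<m. \<Sum>i<n. B $$ (j, i) * A $$ (i, j))"
    by (subst sum.swap) (simp add: mult.commute)
  also have "\<dots> = (\<Sum>j<m. (B * A) $$ (j, j))"
    using A B by (auto simp: scalar_prod_def lessThan_atLeast0 intro!: sum.cong)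
  finally show ?thesis .
qed

lemma the_mat_inverse_eqI:
  fixes M X :: "'a::field mat"
  assumes M: "M \<in> carrier_mat n n" and X: "X \<in> carrier_mat n n"
    and MX: "M * X = 1\<^sub>m n" and XM: "X * M = 1\<^sub>m n"
  shows "the (mat_inverse M) = X"
proof (cases "mat_inverse M")
  case None
  have "M \<in> Units (ring_mat TYPE('a) n ())"
    unfolding Units_def ring_mat_simps using M X MX XM by auto
  with mat_inverse(1)[OF M None, of "()"] show ?thesis by blast
next
  case (Some X')
  from mat_inverse(2)[OF M Some] have X': "X' * M = 1\<^sub>m n" "X' \<in> carrier_mat n n" by auto
  have "X' = X' * (M * X)" using MX X' by simp
  also have "\<dots> = (X' * M) * X" by (rule assoc_mult_mat[symmetric, OF X'(2) M X])
  finally show ?thesis using X'(1) X Some by simp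
qed

lemma invertible_mat_obtain_inverse:
  fixes M :: "'a::comm_ring_1 mat"
  assumes "invertible_mat M" and M: "M \<in> carrier_mat n n"
  obtains X where "X \<in> carrier_mat n n" "M * X = 1\<^sub>m n" "X * M = 1\<^sub>m n"
proof -
  from assms(1) obtain X where MX: "M * X = 1\<^sub>m (dim_row M)" and XM: "X * M = 1\<^sub>m (dim_row X)"
    unfolding invertible_mat_def inverts_mat_def by auto
  have "dim_row X = n" using XM M by (metis carrier_matD(2) index_mult_mat(3) index_one_mat(3))
  moreover have "dim_col X = n" using MX M by (metis carrier_matD(1) index_mult_mat(3) index_one_mat(3))
  ultimately show ?thesis using that MX XM M by auto
qed

lemma invertible_mat_det_nonzero:
  fixes M :: "'a::comm_ring_1 mat"
  assumes "invertible_mat M" and M: "M \<in> carrier_mat n n"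
  shows "det M \<noteq> 0"
proof -
  obtain X where "X \<in> carrier_mat n n" "M * X = 1\<^sub>m n"
    using invertible_mat_obtain_inverse[OF assms] by blast
  then have "det M * det X = 1" using det_mult[OF M] by (metis det_one)
  then show ?thesis by auto
qed

lemma adj_mat_scaled_inverse:
  fixes M :: "'a::field mat"
  assumes M: "M \<in> carrier_mat n n" and "det M \<noteq> 0"
  shows "(1 / det M) \<cdot>\<^sub>m adj_mat M \<in> carrier_mat n n"
    and "M * ((1 / det M) \<cdot>\<^sub>m adj_mat M) = 1\<^sub>m n"
    and "(1 / det M) \<cdot>\<^sub>m adj_mat M * M = 1\<^sub>m n"
  using adj_mat[OF M] assms
  by (simp_all add: mult_smult_distrib[OF M adj_mat(1)[OF M]]
      mult_smult_assoc_mat[OF adj_mat(1)[OF M] M]) (intro eq_matI; simp)+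

lemma the_mat_inverse_adj:
  fixes M :: "'a::field mat"
  assumes "M \<in> carrier_mat n n" and "det M \<noteq> 0"
  shows "the (mat_inverse M) = (1 / det M) \<cdot>\<^sub>m adj_mat M"
  using the_mat_inverse_eqI[OF assms(1)] adj_mat_scaled_inverse[OF assms] by blast

lemma similar_mat_wit_shift:
  fixes Y T P Q :: "'a::comm_ring_1 mat"
  assumes sim: "similar_mat_wit Y T P Q" and T: "T \<in> carrier_mat n n"
  shows "similar_mat_wit (Y + c \<cdot>\<^sub>m 1\<^sub>m n) (T + c \<cdot>\<^sub>m 1\<^sub>m n) P Q"
proof -
  have Y: "Y \<in> carrier_mat n n"
    using similar_mat_witD2(5)[OF T similar_mat_wit_sym[OF sim]] .
  from similar_mat_witD2[OF Y sim]
  have P: "P \<in> carrier_mat n n" and Q: "Q \<in> carrier_mat n n"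
    and PQ: "P * Q = 1\<^sub>m n" and QP: "Q * P = 1\<^sub>m n" and YPTQ: "Y = P * T * Q" by auto
  have "P * (T + c \<cdot>\<^sub>m 1\<^sub>m n) = P * T + c \<cdot>\<^sub>m P"
    using P T by (simp add: mult_add_distrib_mat[of P n n T] mult_smult_distrib[OF P one_carrier_mat]
        right_mult_one_mat[OF P])
  then have "P * (T + c \<cdot>\<^sub>m 1\<^sub>m n) * Q = Y + c \<cdot>\<^sub>m 1\<^sub>m n"
    using P T Q unfolding YPTQ
    by (simp add: add_mult_distrib_mat[of _ n n _ Q n] mult_smult_assoc_mat[OF P Q] PQ)
  then show ?thesis
    using P Q T Y PQ QP by (intro similar_mat_witI[of _ _ n]) auto
qed

lemma similar_mat_wit_inverse:
  fixes Y T P Q V :: "'a::comm_ring_1 mat"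
  assumes sim: "similar_mat_wit Y T P Q" and T: "T \<in> carrier_mat n n"
    and V: "V \<in> carrier_mat n n" and TV: "T * V = 1\<^sub>m n" and VT: "V * T = 1\<^sub>m n"
  shows "Y * (P * V * Q) = 1\<^sub>m n" and "(P * V * Q) * Y = 1\<^sub>m n"
proof -
  have Y: "Y \<in> carrier_mat n n"
    using similar_mat_witD2(5)[OF T similar_mat_wit_sym[OF sim]] .
  from similar_mat_witD2[OF Y sim]
  have P: "P \<in> carrier_mat n n" and Q: "Q \<in> carrier_mat n n"
    and PQ: "P * Q = 1\<^sub>m n" and QP: "Q * P = 1\<^sub>m n" and YPTQ: "Y = P * T * Q" by auto
  have cancel: "F * (G * H) = H" if "F * G = 1\<^sub>m n" "F \<in> carrier_mat n n" "G \<in> carrier_mat n n"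
    "H \<in> carrier_mat n n" for F G H :: "'a mat"
    using that by (simp add: assoc_mult_mat[symmetric, of F n n G n H n] left_mult_one_mat)
  have conj: "(P * R * Q) * (P * S * Q) = 1\<^sub>m n"
    if "R \<in> carrier_mat n n" "S \<in> carrier_mat n n" "R * S = 1\<^sub>m n" for R S
  proof -
    have "(P * R * Q) * (P * S * Q) = P * (R * (Q * (P * (S * Q))))"
      using P Q that by (simp add: assoc_mult_mat[of _ n n _ n _ n])
    also have "\<dots> = 1\<^sub>m n"
      using P Q that by (simp add: cancel QP PQ)
    finally show ?thesis .
  qed
  show "Y * (P * V * Q) = 1\<^sub>m n" "(P * V * Q) * Y = 1\<^sub>m n"
    unfolding YPTQ using conj T V TV VT by auto
qed

lemma invertible_mat_similar_shift:
  fixes Y T P Q :: "'a::field mat"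
  assumes sim: "similar_mat_wit Y T P Q" and T: "T \<in> carrier_mat n n" and ut: "upper_triangular T"
    and nz: "\<And>i. i < n \<Longrightarrow> T $$ (i, i) + c \<noteq> 0"
  shows "invertible_mat (Y + c \<cdot>\<^sub>m 1\<^sub>m n)"
    and "(\<Sum>i<n. the (mat_inverse (Y + c \<cdot>\<^sub>m 1\<^sub>m n)) $$ (i, i)) = (\<Sum>i<n. 1 / (T $$ (i, i) + c))"
proof -
  define U where "U = T + c \<cdot>\<^sub>m 1\<^sub>m n"
  have U: "U \<in> carrier_mat n n" unfolding U_def using T by auto
  have Uut: "upper_triangular U"
    using upper_triangularD[OF ut] T unfolding U_def by (intro upper_triangularI) auto
  have Udiag: "U $$ (i, i) = T $$ (i, i) + c" if "i < n" for i
    using T that unfolding U_def by auto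
  have "det U \<noteq> 0"
    using upper_triangular_imp_det_eq_0_iff[OF U Uut] nz U by (auto simp: diag_mat_def Udiag)
  then obtain V where V: "V \<in> carrier_mat n n" "U * V = 1\<^sub>m n" "V * U = 1\<^sub>m n"
    using adj_mat_scaled_inverse[OF U] by blast
  have sim_shift: "similar_mat_wit (Y + c \<cdot>\<^sub>m 1\<^sub>m n) U P Q"
    unfolding U_def by (rule similar_mat_wit_shift[OF sim T])
  from similar_mat_witD2[OF U similar_mat_wit_sym[OF sim_shift]]
  have M: "Y + c \<cdot>\<^sub>m 1\<^sub>m n \<in> carrier_mat n n" and P: "P \<in> carrier_mat n n"
    and Q: "Q \<in> carrier_mat n n" and QP: "Q * P = 1\<^sub>m n" by auto
  note inverse = similar_mat_wit_inverse[OF sim_shift U V]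
  have X: "P * V * Q \<in> carrier_mat n n" using P Q V by auto
  show "invertible_mat (Y + c \<cdot>\<^sub>m 1\<^sub>m n)"
    unfolding invertible_mat_def inverts_mat_def using M X inverse by auto
  have "(\<Sum>i<n. (P * V * Q) $$ (i, i)) = (\<Sum>i<n. (Q * (P * V)) $$ (i, i))"
    by (rule trace_mult_comm) (use P V Q in auto)
  also have "Q * (P * V) = V"
    using P V Q QP by (simp add: assoc_mult_mat[symmetric, of Q n n P n V n])
  finally show "(\<Sum>i<n. the (mat_inverse (Y + c \<cdot>\<^sub>m 1\<^sub>m n)) $$ (i, i)) = (\<Sum>i<n. 1 / (T $$ (i, i) + c))"
    using the_mat_inverse_eqI[OF M X inverse] upper_triangular_left_inverse_diag[OF U Uut _ V(1,3)]
      nz Udiag by simp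
qed

lemma poly_prod_list_linear: "poly (\<Prod>a\<leftarrow>xs. [:- a, 1:]) x = (\<Prod>a\<leftarrow>xs. x - (a::'a::comm_ring_1))"
  by (induct xs) (auto simp: algebra_simps)

lemma eigenvalue_diag_similar_upper_triangular:
  fixes Y T :: "'a::field mat"
  assumes sim: "similar_mat Y T" and T: "T \<in> carrier_mat n n" and ut: "upper_triangular T" and i: "i < n"
  shows "eigenvalue Y (T $$ (i, i))"
proof -
  have Y: "Y \<in> carrier_mat n n"
    using similar_matD[OF sim] T by auto
  have "poly (char_poly T) (T $$ (i, i)) = (\<Prod>a\<leftarrow>diag_mat T. T $$ (i, i) - a)"
    unfolding char_poly_upper_triangular[OF T ut] poly_prod_list_linear ..
  also have "\<dots> = 0" unfolding prod_list_zero_iff using i T by (auto simp: diag_mat_def)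
  finally show ?thesis
    unfolding eigenvalue_root_char_poly[OF Y] char_poly_similar[OF sim] .
qed

lemma invertible_similar_upper_triangular_diag_nonzero:
  fixes Y T :: "'a::field mat"
  assumes "similar_mat Y T" and Y: "Y \<in> carrier_mat n n" and T: "T \<in> carrier_mat n n"
    and ut: "upper_triangular T" and i: "i < n" and inv: "invertible_mat Y"
  shows "T $$ (i, i) \<noteq> 0"
proof -
  have "det T \<noteq> 0" using invertible_mat_det_nonzero[OF inv Y] det_similar[OF assms(1)] by simp
  then have "0 \<notin> set (diag_mat T)" using upper_triangular_imp_det_eq_0_iff[OF T ut] by simp
  then show ?thesis using i T by (auto simp: diag_mat_def)
qed

lemma the_mat_inverse_carrier:
  fixes M :: "'a::field mat"
  assumes "invertible_mat M" and M: "M \<in> carrier_mat n n"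
  shows "the (mat_inverse M) \<in> carrier_mat n n"
  using invertible_mat_obtain_inverse[OF assms] the_mat_inverse_eqI[OF M] by metis

definition mean_resolvent :: "(nat \<Rightarrow> real) \<Rightarrow> nat \<Rightarrow> real \<Rightarrow> real" where
  "mean_resolvent d n t = (\<Sum>i<n. 1 / (d i + t)) / real n"

lemma Y0_spectral_trace:
  fixes A :: "complex mat"
  assumes A: "A \<in> carrier_mat n n"
  obtains d :: "nat \<Rightarrow> real"
  where "\<And>i. i < n \<Longrightarrow> 0 \<le> d i"
    and "\<And>i. invertible_mat (Y0 A z) \<Longrightarrow> i < n \<Longrightarrow> d i \<noteq> 0"
    and "\<And>t. (\<And>i. i < n \<Longrightarrow> d i + t \<noteq> 0) \<Longrightarrow>
          invertible_mat (Y0 A z + complex_of_real t \<cdot>\<^sub>m 1\<^sub>m n) \<and>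
          trn (G A z t) = complex_of_real (mean_resolvent d n t)"
proof -
  define Y where "Y = Y0 A z"
  have Y: "Y \<in> carrier_mat n n" unfolding Y_def by (rule Y0_carrier[OF A])
  obtain es where es: "char_poly Y = (\<Prod>a\<leftarrow>es. [:- a, 1:])"
    using char_poly_factorized[OF Y] by blast
  obtain T P Q where "schur_decomposition Y es = (T, P, Q)"
    by (cases "schur_decomposition Y es") auto
  from schur_decomposition[OF Y es this]
  have sim: "similar_mat_wit Y T P Q" and ut: "upper_triangular T" by auto
  have T: "T \<in> carrier_mat n n" using similar_mat_witD2(5)[OF Y sim] .
  define d where "d i = Re (T $$ (i, i))" for i
  have Td: "T $$ (i, i) = of_real (d i) \<and> 0 \<le> d i" if "i < n" for i
    using eigenvalue_Y0_nonneg[OF A eigenvalue_diag_similar_upper_triangular[OF _ T ut that]] sim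
    unfolding d_def Y_def similar_mat_def by blast
  have "d i \<noteq> 0" if "invertible_mat (Y0 A z)" "i < n" for i
    using invertible_similar_upper_triangular_diag_nonzero[OF _ Y T ut that(2)] that(1) sim Td[OF that(2)]
    unfolding Y_def similar_mat_def by fastforce
  moreover have "invertible_mat (Y0 A z + complex_of_real t \<cdot>\<^sub>m 1\<^sub>m n) \<and>
          trn (G A z t) = complex_of_real (mean_resolvent d n t)"
    if dt: "\<And>i. i < n \<Longrightarrow> d i + t \<noteq> 0" for t
  proof -
    have nz: "T $$ (i, i) + complex_of_real t \<noteq> 0" if "i < n" for i
      using Td[OF that] dt[OF that] by (metis of_real_add of_real_eq_0_iff)
    note shift = invertible_mat_similar_shift[OF sim T ut nz]
    have G: "G A z t = the (mat_inverse (Y + complex_of_real t \<cdot>\<^sub>m 1\<^sub>m n))"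
      unfolding G_def Y_def using A by simp
    have "G A z t \<in> carrier_mat n n"
      unfolding G by (rule the_mat_inverse_carrier[OF shift(1)]) (use Y in auto)
    then have "trn (G A z t) = (\<Sum>i<n. 1 / (T $$ (i, i) + complex_of_real t)) / of_nat n"
      unfolding trn_def using shift(2) G by simp
    also have "\<dots> = complex_of_real (mean_resolvent d n t)"
      unfolding mean_resolvent_def using Td by simp
    finally show ?thesis using shift(1) Y_def by simp
  qed
  ultimately show ?thesis using that Td by blast
qed

lemma mean_resolvent_nonneg: "(\<And>i. i < n \<Longrightarrow> 0 \<le> d i) \<Longrightarrow> 0 \<le> t \<Longrightarrow> 0 \<le> mean_resolvent d n t"
  unfolding mean_resolvent_def by (intro divide_nonneg_nonneg sum_nonneg) auto

lemma mean_resolvent_antimono: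
  "(\<And>i. i < n \<Longrightarrow> 0 < d i + s) \<Longrightarrow> s \<le> t \<Longrightarrow> mean_resolvent d n t \<le> mean_resolvent d n s"
  unfolding mean_resolvent_def
  by (intro divide_right_mono sum_mono) (auto simp: inverse_eq_divide[symmetric] intro!: le_imp_inverse_le)

lemma mean_resolvent_le: "(\<And>i. i < n \<Longrightarrow> 0 \<le> d i) \<Longrightarrow> 0 < t \<Longrightarrow> mean_resolvent d n t \<le> 1 / t"
proof (cases "n = 0")
  case False
  assume d: "\<And>i. i < n \<Longrightarrow> 0 \<le> d i" and t: "0 < t"
  have "(\<Sum>i<n. 1 / (d i + t)) \<le> (\<Sum>i<n. 1 / t)"
    using d t by (intro sum_mono) (auto simp: inverse_eq_divide[symmetric] intro!: le_imp_inverse_le)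
  then show ?thesis unfolding mean_resolvent_def using False t by (simp add: field_simps)
qed (simp add: mean_resolvent_def)

lemma continuous_on_mean_resolvent:
  "(\<And>i. i < n \<Longrightarrow> 0 \<le> d i) \<Longrightarrow> continuous_on {0<..} (mean_resolvent d n)"
  unfolding mean_resolvent_def
  by (cases "n = 0") (auto intro!: continuous_intros simp: add_nonneg_pos[THEN less_imp_neq, THEN not_sym])

lemma unique_positive_root:
  fixes \<phi> :: "real \<Rightarrow> real" and \<epsilon> :: real
  assumes eps: "0 < \<epsilon>" and nonneg: "\<And>s. 0 < s \<Longrightarrow> 0 \<le> \<phi> s"
    and antimono: "\<And>s t. 0 < s \<Longrightarrow> s \<le> t \<Longrightarrow> \<phi> t \<le> \<phi> s"
    and le: "\<And>s. 0 < s \<Longrightarrow> \<phi> s \<le> 1 / s"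
    and cont: "continuous_on {0<..} \<phi>"
  shows "\<exists>!x. 0 < x \<and> 1 - \<phi> (x\<^sup>2) = \<epsilon> / x"
proof -
  define h where "h x = x * (1 - \<phi> (x\<^sup>2))" for x
  have root_iff: "1 - \<phi> (x\<^sup>2) = \<epsilon> / x \<longleftrightarrow> h x = \<epsilon>" if "0 < x" for x
    using that unfolding h_def by (auto simp: field_simps)
  define a where "a = \<epsilon> / 2"
  define b where "b = \<epsilon> + 1"
  have ab: "0 < a" "a \<le> b" using eps unfolding a_def b_def by auto
  have "h a \<le> a" unfolding h_def using nonneg[of "a\<^sup>2"] ab by (simp add: mult_left_le)
  then have ha: "h a \<le> \<epsilon>" using eps unfolding a_def by simp
  have "b * (1 - 1 / b\<^sup>2) \<le> h b"
    unfolding h_def using le[of "b\<^sup>2"] ab by (intro mult_left_mono) auto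
  moreover have "b * (1 - 1 / b\<^sup>2) = b - 1 / b" using ab by (simp add: field_simps power2_eq_square)
  moreover have "1 / b \<le> 1" using eps unfolding b_def by auto
  ultimately have hb: "\<epsilon> \<le> h b" unfolding b_def by linarith
  have "continuous_on {a..b} (\<lambda>x. \<phi> (x\<^sup>2))"
    using ab by (intro continuous_on_compose2[OF cont]) (auto intro!: continuous_intros)
  then have "continuous_on {a..b} h" unfolding h_def by (intro continuous_intros)
  then obtain x where x: "a \<le> x" "x \<le> b" "h x = \<epsilon>"
    using IVT'[of h a \<epsilon> b, OF ha hb ab(2)] by auto
  \<comment> \<open>\<open>h\<close> is strictly increasing wherever \<open>1 - \<phi> (x\<^sup>2)\<close> is positive, in particular at a root.\<close>
  have no_two_roots: False if "0 < u" "u < v" "h u = \<epsilon>" "h v = \<epsilon>" for u v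
  proof -
    have pos: "0 < 1 - \<phi> (u\<^sup>2)"
      using that eps unfolding h_def by (metis mult_pos_pos not_less_iff_gr_or_eq zero_less_mult_pos)
    have "\<phi> (v\<^sup>2) \<le> \<phi> (u\<^sup>2)" using antimono[of "u\<^sup>2" "v\<^sup>2"] that by (auto intro: power_mono)
    then have "v * (1 - \<phi> (u\<^sup>2)) \<le> h v" unfolding h_def using that by (intro mult_left_mono) auto
    moreover have "u * (1 - \<phi> (u\<^sup>2)) < v * (1 - \<phi> (u\<^sup>2))" using that pos by auto
    ultimately show False using that unfolding h_def by linarith
  qed
  show ?thesis
  proof (rule ex1I[of _ x])
    show "0 < x \<and> 1 - \<phi> (x\<^sup>2) = \<epsilon> / x" using x ab root_iff by auto
    show "y = x" if "0 < y \<and> 1 - \<phi> (y\<^sup>2) = \<epsilon> / y" for y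
      using no_two_roots[of x y] no_two_roots[of y x] root_iff[of y] that x ab
      by (metis linorder_neqE_linordered_idom order_less_le_trans)
  qed
qed

lemma trn_G_unique_positive_root:
  fixes A :: "complex mat"
  assumes A: "A \<in> carrier_mat n n" and eps: "0 < \<epsilon>"
  shows "\<exists>!x. 0 < x \<and> 1 - trn (G A z (x\<^sup>2)) = complex_of_real (\<epsilon> / x)"
proof -
  obtain d where d: "\<And>i. i < n \<Longrightarrow> 0 \<le> d i"
    and tr: "\<And>t. (\<And>i. i < n \<Longrightarrow> d i + t \<noteq> 0) \<Longrightarrow>
          trn (G A z t) = complex_of_real (mean_resolvent d n t)"
    using Y0_spectral_trace[OF A, of z] by metis
  have root_iff: "1 - trn (G A z (x\<^sup>2)) = complex_of_real (\<epsilon> / x) \<longleftrightarrow>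
      1 - mean_resolvent d n (x\<^sup>2) = \<epsilon> / x" if "0 < x" for x
  proof -
    have "trn (G A z (x\<^sup>2)) = complex_of_real (mean_resolvent d n (x\<^sup>2))"
      using d that by (intro tr) (auto simp: add_nonneg_eq_0_iff)
    then show ?thesis by (metis of_real_1 of_real_diff of_real_eq_iff)
  qed
  have "\<exists>!x. 0 < x \<and> 1 - mean_resolvent d n (x\<^sup>2) = \<epsilon> / x"
  proof (rule unique_positive_root[OF eps])
    show "0 \<le> mean_resolvent d n s" if "0 < s" for s
      using d that by (intro mean_resolvent_nonneg) auto
    show "mean_resolvent d n t \<le> mean_resolvent d n s" if "0 < s" "s \<le> t" for s t
      using d that by (intro mean_resolvent_antimono) (auto intro: add_nonneg_pos)
    show "mean_resolvent d n s \<le> 1 / s" if "0 < s" for s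
      using d that by (intro mean_resolvent_le) auto
    show "continuous_on {0<..} (mean_resolvent d n)"
      using d by (intro continuous_on_mean_resolvent) auto
  qed
  then show ?thesis using root_iff by (metis (no_types, lifting))
qed

lemma AE_ge_of_null_ball:
  fixes \<mu> :: "real measure"
  assumes "prob_space \<mu>" and sets_eq: "sets \<mu> = sets borel"
    and nonneg: "emeasure \<mu> {0..} = 1" and null: "measure \<mu> (ball 0 e) = 0"
  shows "AE l in \<mu>. e \<le> l"
proof -
  interpret prob_space \<mu> by fact
  have "ball 0 e \<in> null_sets \<mu>"
    using null emeasure_eq_measure sets_eq by (auto simp: null_sets_def)
  moreover have "space \<mu> - {0..} \<in> null_sets \<mu>"
    using nonneg prob_compl[of "{0..}"] emeasure_eq_measure sets_eq by (auto simp: null_sets_def)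
  ultimately have "AE l in \<mu>. l \<notin> ball 0 e" and "AE l in \<mu>. l \<notin> space \<mu> - {0..}"
    using AE_not_in by blast+
  then show ?thesis
    by eventually_elim (auto simp: sets_eq_imp_space_eq[OF sets_eq] dist_real_def)
qed

context
  fixes \<mu> :: "real measure" and e :: real
  assumes prob: "prob_space \<mu>" and sets_eq: "sets \<mu> = sets borel"
    and e: "0 < e" and AE_ge: "AE l in \<mu>. e \<le> l"
begin

lemma integrable_inverse_shift:
  assumes "0 \<le> s"
  shows "integrable \<mu> (\<lambda>l. 1 / (l + s))"
proof -
  interpret prob_space \<mu> by (rule prob)
  show ?thesis
  proof (rule integrable_const_bound[where B = "1 / e"])
    show "AE l in \<mu>. norm (1 / (l + s)) \<le> 1 / e"
      using AE_ge by eventually_elim (use e assms in \<open>auto intro!: divide_left_mono\<close>)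
    show "(\<lambda>l. 1 / (l + s)) \<in> borel_measurable \<mu>"
      unfolding measurable_cong_sets[OF sets_eq refl] by measurable
  qed
qed

lemma integral_inverse_shift_antimono:
  "0 \<le> s \<Longrightarrow> s \<le> t \<Longrightarrow> (\<integral>l. 1 / (l + t) \<partial>\<mu>) \<le> (\<integral>l. 1 / (l + s) \<partial>\<mu>)"
  by (rule integral_mono_AE[OF integrable_inverse_shift integrable_inverse_shift],
      use AE_ge e in \<open>auto elim!: eventually_mono intro!: le_imp_inverse_le
        simp: inverse_eq_divide[symmetric]\<close>)

lemma integral_inverse_shift_nonneg: "0 \<le> s \<Longrightarrow> 0 \<le> (\<integral>l. 1 / (l + s) \<partial>\<mu>)"
  by (rule integral_nonneg_AE) (use AE_ge e in \<open>auto elim!: eventually_mono\<close>)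

lemma integral_inverse_shift_le: "0 < s \<Longrightarrow> (\<integral>l. 1 / (l + s) \<partial>\<mu>) \<le> 1 / s"
proof -
  interpret prob_space \<mu> by (rule prob)
  assume s: "0 < s"
  have "(\<integral>l. 1 / (l + s) \<partial>\<mu>) \<le> (\<integral>l. 1 / s \<partial>\<mu>)"
    by (rule integral_mono_AE[OF integrable_inverse_shift])
      (use AE_ge e s in \<open>auto elim!: eventually_mono intro!: divide_left_mono\<close>)
  then show ?thesis by (simp add: prob_space)
qed

lemma lipschitz_on_integral_inverse_shift:
  "(1 / e\<^sup>2)-lipschitz_on {0..} (\<lambda>s. \<integral>l. 1 / (l + s) \<partial>\<mu>)"
proof (rule lipschitz_onI)
  interpret prob_space \<mu> by (rule prob)
  fix s t :: real assume "s \<in> {0..}" "t \<in> {0..}"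
  then have st: "0 \<le> s" "0 \<le> t" by auto
  have pointwise: "\<bar>1 / (l + s) - 1 / (l + t)\<bar> \<le> \<bar>s - t\<bar> / e\<^sup>2" if "e \<le> l" for l
  proof -
    have pos: "e \<le> l + s" "e \<le> l + t" using that st by auto
    then have "e * e \<le> (l + s) * (l + t)" using e by (intro mult_mono) auto
    moreover have "1 / (l + s) - 1 / (l + t) = (t - s) / ((l + s) * (l + t))"
      using pos e by (simp add: field_simps)
    then have "\<bar>1 / (l + s) - 1 / (l + t)\<bar> = \<bar>s - t\<bar> / ((l + s) * (l + t))"
      using pos e by (simp add: abs_divide abs_minus_commute)
    ultimately show ?thesis
      using pos e by (simp add: power2_eq_square divide_left_mono)
  qed
  have "dist (\<integral>l. 1 / (l + s) \<partial>\<mu>) (\<integral>l. 1 / (l + t) \<partial>\<mu>)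
      = \<bar>\<integral>l. 1 / (l + s) - 1 / (l + t) \<partial>\<mu>\<bar>"
    using integrable_inverse_shift st by (simp add: dist_real_def)
  also have "\<dots> \<le> (\<integral>l. \<bar>1 / (l + s) - 1 / (l + t)\<bar> \<partial>\<mu>)"
    by (rule integral_abs_bound)
  also have "\<dots> \<le> (\<integral>l. \<bar>s - t\<bar> / e\<^sup>2 \<partial>\<mu>)"
    using integrable_inverse_shift st AE_ge pointwise
    by (intro integral_mono_AE) (auto elim!: eventually_mono)
  also have "\<dots> = 1 / e\<^sup>2 * dist s t" by (simp add: prob_space dist_real_def)
  finally show "dist (\<integral>l. 1 / (l + s) \<partial>\<mu>) (\<integral>l. 1 / (l + t) \<partial>\<mu>) \<le> 1 / e\<^sup>2 * dist s t" .
qed simp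

lemma integral_inverse_shift_unique_positive_root:
  assumes "0 < \<epsilon>"
  shows "\<exists>!x. 0 < x \<and> 1 - (\<integral>l. 1 / (l + x\<^sup>2) \<partial>\<mu>) = \<epsilon> / x"
proof (rule unique_positive_root[OF assms])
  show "continuous_on {0<..} (\<lambda>s. \<integral>l. 1 / (l + s) \<partial>\<mu>)"
    using lipschitz_on_continuous_on[OF lipschitz_on_integral_inverse_shift]
    by (rule continuous_on_subset) auto
qed (auto intro: integral_inverse_shift_nonneg integral_inverse_shift_antimono integral_inverse_shift_le)

lemma integral_inverse_shift_ne_one:
  assumes "(\<integral>l. 1 / l \<partial>\<mu>) < 1" and "0 \<le> x"
  shows "(\<integral>l. 1 / (l + x\<^sup>2) \<partial>\<mu>) \<noteq> 1"
  using integral_inverse_shift_antimono[of 0 "x\<^sup>2"] assms(1) by simp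

end

lemma continuous_on_det:
  fixes F :: "'b::topological_space \<Rightarrow> 'a::real_normed_field mat"
  assumes carrier: "\<And>z. z \<in> S \<Longrightarrow> F z \<in> carrier_mat m m"
    and entries: "\<And>i j. i < m \<Longrightarrow> j < m \<Longrightarrow> continuous_on S (\<lambda>z. F z $$ (i, j))"
  shows "continuous_on S (\<lambda>z. det (F z))"
proof -
  have "continuous_on S (\<lambda>z. \<Prod>i = 0..<m. F z $$ (i, p i))" if "p permutes {0..<m}" for p
    using permutes_in_image[OF that] by (intro continuous_on_prod entries) auto
  then have "continuous_on S (\<lambda>z. \<Sum>p\<in>{p. p permutes {0..<m}}. signof p * (\<Prod>i = 0..<m. F z $$ (i, p i)))"
    by (intro continuous_on_sum continuous_on_mult_left) auto
  then show ?thesis by (rule continuous_on_eq) (rule det_def'[OF carrier, symmetric])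
qed

lemma index_Y0:
  assumes A: "A \<in> carrier_mat n n" and "i < n" "j < n"
  shows "Y0 A z $$ (i, j) =
    (\<Sum>k<n. (A $$ (i, k) - (if i = k then z else 0)) * cnj (A $$ (j, k) - (if j = k then z else 0)))"
  unfolding Y0_def Let_def using assms
  by (subst index_mult_adjoint[of _ n n]) (auto intro!: sum.cong)

lemma continuous_on_index_Y0:
  assumes "A \<in> carrier_mat n n" "i < n" "j < n"
  shows "continuous_on S (\<lambda>z. Y0 A z $$ (i, j))"
proof -
  have "continuous_on S (\<lambda>z::complex. if b then z else 0)" for b
    by (cases b) (auto intro: continuous_intros)
  then have "continuous_on S (\<lambda>z. \<Sum>k<n. (A $$ (i, k) - (if i = k then z else 0)) *
      cnj (A $$ (j, k) - (if j = k then z else 0)))"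
    by (intro continuous_intros)
  then show ?thesis by (rule continuous_on_eq) (use index_Y0[OF assms] in auto)
qed

lemma trn_G0_cofactor:
  fixes A :: "complex mat"
  assumes A: "A \<in> carrier_mat n n" and inv: "invertible_mat (Y0 A z)"
  shows "trn (G A z 0) = (\<Sum>i<n. det (mat_delete (Y0 A z) i i)) / det (Y0 A z) / of_nat n"
proof -
  have Y: "Y0 A z \<in> carrier_mat n n" by (rule Y0_carrier[OF A])
  have det: "det (Y0 A z) \<noteq> 0" by (rule invertible_mat_det_nonzero[OF inv Y])
  have "Y0 A z + complex_of_real 0 \<cdot>\<^sub>m 1\<^sub>m n = Y0 A z" using Y by (intro eq_matI) auto
  then have G: "G A z 0 = (1 / det (Y0 A z)) \<cdot>\<^sub>m adj_mat (Y0 A z)"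
    unfolding G_def using A the_mat_inverse_adj[OF Y det] by simp
  have "(-1::complex) ^ (i + i) = 1" for i by (simp add: mult_2[symmetric] power_mult)
  then have "(\<Sum>i<n. G A z 0 $$ (i, i)) = (\<Sum>i<n. det (mat_delete (Y0 A z) i i) / det (Y0 A z))"
    unfolding G using Y by (auto simp: adj_mat_def cofactor_def intro!: sum.cong)
  then show ?thesis
    unfolding trn_def using G Y adj_mat(1)[OF Y] by (simp add: sum_divide_distrib)
qed

lemma continuous_on_trn_G0:
  fixes A :: "complex mat"
  assumes A: "A \<in> carrier_mat n n" and inv: "\<And>z. z \<in> S \<Longrightarrow> invertible_mat (Y0 A z)"
  shows "continuous_on S (\<lambda>z. trn (G A z 0))"
proof -
  have "continuous_on S (\<lambda>z. det (Y0 A z))"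
    by (rule continuous_on_det) (auto intro: Y0_carrier[OF A] continuous_on_index_Y0[OF A])
  moreover have "continuous_on S (\<lambda>z. det (mat_delete (Y0 A z) i i))" if "i < n" for i
  proof (rule continuous_on_det)
    show "mat_delete (Y0 A z) i i \<in> carrier_mat (n - 1) (n - 1)" for z
      using Y0_carrier[OF A, of z] by (auto simp: mat_delete_def)
    fix k l assume kl: "k < n - 1" "l < n - 1"
    have "continuous_on S (\<lambda>z. Y0 A z $$ (if k < i then k else Suc k, if l < i then l else Suc l))"
      using kl by (intro continuous_on_index_Y0[OF A]) auto
    then show "continuous_on S (\<lambda>z. mat_delete (Y0 A z) i i $$ (k, l))"
      by (rule continuous_on_eq) (use kl in \<open>auto simp: mat_delete_def carrier_matD[OF Y0_carrier[OF A]]\<close>)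
  qed
  ultimately have "continuous_on S (\<lambda>z. (\<Sum>i<n. det (mat_delete (Y0 A z) i i)) / det (Y0 A z) / of_nat n)"
    using invertible_mat_det_nonzero[OF inv Y0_carrier[OF A]]
    by (cases "n = 0") (auto intro!: continuous_intros)
  then show ?thesis by (rule continuous_on_eq) (use trn_G0_cofactor[OF A inv] in auto)
qed

lemma trn_G_ne_one_of_Re_trn_G0_lt_one:
  fixes A :: "complex mat"
  assumes A: "A \<in> carrier_mat n n" and inv: "invertible_mat (Y0 A z)"
    and lt: "Re (trn (G A z 0)) < 1" and t: "0 \<le> t"
  shows "invertible_mat (Y0 A z + complex_of_real t \<cdot>\<^sub>m 1\<^sub>m n) \<and> trn (G A z t) \<noteq> 1"
proof -
  obtain d where d: "\<And>i. i < n \<Longrightarrow> 0 \<le> d i" "\<And>i. i < n \<Longrightarrow> d i \<noteq> 0"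
    and tr: "\<And>t. (\<And>i. i < n \<Longrightarrow> d i + t \<noteq> 0) \<Longrightarrow>
          invertible_mat (Y0 A z + complex_of_real t \<cdot>\<^sub>m 1\<^sub>m n) \<and>
          trn (G A z t) = complex_of_real (mean_resolvent d n t)"
    using Y0_spectral_trace[OF A, of z] inv by metis
  have pos: "0 < d i + s" if "i < n" "0 \<le> s" for i s
    using d[OF that(1)] that(2) by linarith
  have shifted: "invertible_mat (Y0 A z + complex_of_real t \<cdot>\<^sub>m 1\<^sub>m n) \<and>
      trn (G A z t) = complex_of_real (mean_resolvent d n t)"
    using pos t by (intro tr) (metis less_irrefl)
  have "mean_resolvent d n t \<le> mean_resolvent d n 0"
    using pos[of _ 0] t by (intro mean_resolvent_antimono) auto
  also have "mean_resolvent d n 0 = Re (trn (G A z 0))"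
    using tr[of 0] pos by (metis Re_complex_of_real less_irrefl order_refl)
  finally show ?thesis using shifted lt by (metis less_irrefl of_real_eq_1_iff order_le_less_trans)
qed

lemma eventually_trn_G_ne_one:
  fixes A :: "nat \<Rightarrow> complex mat" and I :: "complex \<Rightarrow> real" and r :: "nat \<Rightarrow> real"
  assumes carrier: "\<And>n. A n \<in> carrier_mat n n" and E: "compact E" and I: "\<And>z. z \<in> E \<Longrightarrow> I z < 1"
    and r: "r \<longlonglongrightarrow> 0"
    and approx: "\<forall>\<^sub>F n in sequentially. \<forall>z\<in>E. invertible_mat (Y0 (A n) z) \<and>
        cmod (trn (G (A n) z 0) - complex_of_real (I z)) < r n"
  shows "\<forall>\<^sub>F n in sequentially. \<forall>z\<in>E. \<forall>x\<ge>0.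
      invertible_mat (Y0 (A n) z + complex_of_real (x\<^sup>2) \<cdot>\<^sub>m 1\<^sub>m n) \<and> trn (G (A n) z (x\<^sup>2)) \<noteq> 1"
proof (cases "E = {}")
  case False
  \<comment> \<open>\<open>I\<close> is a uniform limit of continuous functions on \<open>E\<close>, so its maximum on \<open>E\<close> is \<open>< 1\<close>.\<close>
  have "uniform_limit E (\<lambda>n z. trn (G (A n) z 0)) (\<lambda>z. complex_of_real (I z)) sequentially"
    unfolding uniform_limit_iff
  proof (intro allI impI)
    fix e :: real assume "0 < e"
    from approx order_tendstoD(2)[OF r \<open>0 < e\<close>]
    show "\<forall>\<^sub>F n in sequentially. \<forall>z\<in>E. dist (trn (G (A n) z 0)) (complex_of_real (I z)) < e"
      by eventually_elim (auto simp: dist_norm)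
  qed
  moreover have "\<forall>\<^sub>F n in sequentially. continuous_on E (\<lambda>z. trn (G (A n) z 0))"
    using approx by eventually_elim (auto intro: continuous_on_trn_G0[OF carrier])
  ultimately have "continuous_on E (\<lambda>z. complex_of_real (I z))"
    by (intro uniform_limit_theorem) auto
  then have "continuous_on E I" using continuous_on_Re by fastforce
  then obtain z0 where z0: "z0 \<in> E" "\<And>z. z \<in> E \<Longrightarrow> I z \<le> I z0"
    using continuous_attains_sup[OF E False] by blast
  have "\<forall>\<^sub>F n in sequentially. r n < 1 - I z0"
    using order_tendstoD(2)[OF r] I[OF z0(1)] by simp
  with approx show ?thesis
  proof eventually_elim
    case (elim n)
    show ?case
    proof (intro ballI allI impI)
      fix z and x :: real assume z: "z \<in> E" and "0 \<le> x"
      have "Re (trn (G (A n) z 0)) - I z \<le> cmod (trn (G (A n) z 0) - complex_of_real (I z))"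
        using abs_Re_le_cmod[of "trn (G (A n) z 0) - complex_of_real (I z)"] by simp
      then have "Re (trn (G (A n) z 0)) < 1" using elim z z0(2)[OF z] by fastforce
      then show "invertible_mat (Y0 (A n) z + complex_of_real (x\<^sup>2) \<cdot>\<^sub>m 1\<^sub>m n) \<and> trn (G (A n) z (x\<^sup>2)) \<noteq> 1"
        using elim z by (intro trn_G_ne_one_of_Re_trn_G0_lt_one[OF carrier]) auto
    qed
  qed
qed simp

lemma AE_eventually_of_powr_bound:
  assumes M: "prob_space M" and d: "0 < d"
    and bound: "\<And>n. 1 \<le> n \<Longrightarrow> 1 - real n powr (-1 - d) < \<P>(\<omega> in M. P n \<omega>)"
  shows "AE \<omega> in M. \<forall>\<^sub>F n in sequentially. P n \<omega>"
proof -
  interpret prob_space M by (rule M)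
  define Good where "Good n = {\<omega> \<in> space M. P n \<omega>}" for n
  define Bad where "Bad n = (if 2 \<le> n then space M - Good n else {})" for n
  have small: "real n powr (-1 - d) < 1" if "2 \<le> n" for n :: nat
    using that d by (intro powr_less_one) auto
  have prob_Good: "1 - real n powr (-1 - d) < measure M (Good n)" if "2 \<le> n" for n
    using bound[of n] that unfolding Good_def by simp
  have Good: "Good n \<in> sets M" if "2 \<le> n" for n
  proof (rule ccontr)
    assume "Good n \<notin> sets M"
    then have "measure M (Good n) = 0" by (rule measure_notin_sets)
    then show False using prob_Good[OF that] small[OF that] by simp
  qed
  have Bad: "Bad n \<in> sets M" for n unfolding Bad_def using Good by auto
  have "summable (\<lambda>n. measure M (Bad n))"
  proof (rule summable_comparison_test')
    show "summable (\<lambda>n. real n powr (-1 - d))" using d by (simp add: summable_real_powr_iff)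
    show "norm (measure M (Bad n)) \<le> real n powr (-1 - d)" if "2 \<le> n" for n
      unfolding Bad_def using that prob_compl[OF Good[OF that]] prob_Good[OF that] by simp
  qed
  moreover have "emeasure M (Bad n) < \<infinity>" for n
    using emeasure_finite[of "Bad n"] by (simp add: less_top[symmetric])
  ultimately have "AE \<omega> in M. \<forall>\<^sub>F n in sequentially. \<omega> \<in> space M - Bad n"
    by (intro borel_cantelli_AE1[OF Bad])
  then show ?thesis
  proof (rule AE_mp[OF _ AE_I2], intro impI)
    fix \<omega> assume "\<forall>\<^sub>F n in sequentially. \<omega> \<in> space M - Bad n"
    with eventually_ge_at_top[of 2] show "\<forall>\<^sub>F n in sequentially. P n \<omega>"
      by eventually_elim (auto simp: Bad_def Good_def)
  qed
qed

lemma compact_avoids_sigma_nbhd: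
  assumes E: "compact E" and disj: "E \<inter> closure (Dset nu) = {}"
  obtains \<delta> where "0 < \<delta>" "\<And>z. z \<in> E \<Longrightarrow> z \<notin> sigma_nbhd nu \<delta>"
proof -
  have "closure (sigma0 nu) \<subseteq> closure (Dset nu)"
    unfolding Dset_def by (intro closure_mono) auto
  then have "E \<inter> closure (sigma0 nu) = {}" using disj by blast
  then obtain \<delta> where "0 < \<delta>" "\<forall>x\<in>E. \<forall>y\<in>closure (sigma0 nu). \<delta> \<le> dist x y"
    using separate_compact_closed[OF E closed_closure] by blast
  then show ?thesis
    using that closure_subset unfolding sigma_nbhd_def by fastforce
qed

lemma AE_eventually_trn_G_ne_one:
  fixes M :: "'w measure" and A :: "nat \<Rightarrow> 'w \<Rightarrow> complex mat"
    and nu :: "complex \<Rightarrow> real measure"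
  assumes M: "prob_space M"
    and carrier: "\<forall>n. \<forall>\<omega>\<in>space M. A n \<omega> \<in> carrier_mat n n"
    and C3: "\<exists>d0>0. \<exists>d>0. \<forall>e>0. \<exists>C. \<forall>n\<ge>1.
              \<P>(\<omega> in M. \<exists>c < C * real n powr (- d0). \<forall>z. z \<notin> sigma_nbhd nu e \<longrightarrow>
                  invertible_mat (Y0 (A n \<omega>) z) \<and>
                  cmod (trn (G (A n \<omega>) z 0) - complex_of_real (\<integral>l. 1 / l \<partial>nu z)) \<le> c)
                > 1 - real n powr (-1 - d)"
    and E: "compact E" "E \<inter> closure (Dset nu) = {}"
  shows "AE \<omega> in M. \<exists>n0. \<forall>n\<ge>n0. \<forall>z\<in>E. \<forall>x\<ge>(0::real).
           invertible_mat (Y0 (A n \<omega>) z + complex_of_real (x\<^sup>2) \<cdot>\<^sub>m 1\<^sub>m n) \<and>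
           trn (G (A n \<omega>) z (x\<^sup>2)) \<noteq> 1"
proof -
  obtain \<delta> where \<delta>: "0 < \<delta>" "\<And>z. z \<in> E \<Longrightarrow> z \<notin> sigma_nbhd nu \<delta>"
    using compact_avoids_sigma_nbhd[OF E] by blast
  obtain d0 d where d0: "0 < d0" and d: "0 < d" and rates: "\<forall>e>0. \<exists>C. \<forall>n\<ge>1.
      \<P>(\<omega> in M. \<exists>c < C * real n powr (- d0). \<forall>z. z \<notin> sigma_nbhd nu e \<longrightarrow>
          invertible_mat (Y0 (A n \<omega>) z) \<and>
          cmod (trn (G (A n \<omega>) z 0) - complex_of_real (\<integral>l. 1 / l \<partial>nu z)) \<le> c)
        > 1 - real n powr (-1 - d)"
    using C3 by blast
  obtain C where bound: "\<forall>n\<ge>1.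
      \<P>(\<omega> in M. \<exists>c < C * real n powr (- d0). \<forall>z. z \<notin> sigma_nbhd nu \<delta> \<longrightarrow>
          invertible_mat (Y0 (A n \<omega>) z) \<and>
          cmod (trn (G (A n \<omega>) z 0) - complex_of_real (\<integral>l. 1 / l \<partial>nu z)) \<le> c)
        > 1 - real n powr (-1 - d)"
    using rates \<delta>(1) by blast
  have rate: "(\<lambda>n. C * real n powr (- d0)) \<longlonglongrightarrow> 0"
    using tendsto_mult_right_zero[OF tendsto_neg_powr[OF _ filterlim_real_sequentially], of "-d0" C] d0
    by simp
  have I: "(\<integral>l. 1 / l \<partial>nu z) < 1" if "z \<in> E" for z
  proof -
    have "z \<notin> Dset nu" using that E(2) closure_subset by blast
    then show ?thesis unfolding Dset_def by auto
  qed
  have "AE \<omega> in M. \<forall>\<^sub>F n in sequentially. \<exists>c < C * real n powr (- d0).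
      \<forall>z. z \<notin> sigma_nbhd nu \<delta> \<longrightarrow> invertible_mat (Y0 (A n \<omega>) z) \<and>
        cmod (trn (G (A n \<omega>) z 0) - complex_of_real (\<integral>l. 1 / l \<partial>nu z)) \<le> c"
    by (rule AE_eventually_of_powr_bound[OF M d]) (use bound in blast)
  then show ?thesis
  proof (rule AE_mp[OF _ AE_I2], intro impI)
    fix \<omega> assume \<omega>: "\<omega> \<in> space M" and ev: "\<forall>\<^sub>F n in sequentially. \<exists>c < C * real n powr (- d0).
      \<forall>z. z \<notin> sigma_nbhd nu \<delta> \<longrightarrow> invertible_mat (Y0 (A n \<omega>) z) \<and>
        cmod (trn (G (A n \<omega>) z 0) - complex_of_real (\<integral>l. 1 / l \<partial>nu z)) \<le> c"
    have "\<forall>\<^sub>F n in sequentially. \<forall>z\<in>E. invertible_mat (Y0 (A n \<omega>) z) \<and>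
        cmod (trn (G (A n \<omega>) z 0) - complex_of_real (\<integral>l. 1 / l \<partial>nu z)) < C * real n powr (- d0)"
      using ev
    proof eventually_elim
      case (elim n)
      then obtain c where "c < C * real n powr (- d0)" and "\<forall>z. z \<notin> sigma_nbhd nu \<delta> \<longrightarrow>
          invertible_mat (Y0 (A n \<omega>) z) \<and>
          cmod (trn (G (A n \<omega>) z 0) - complex_of_real (\<integral>l. 1 / l \<partial>nu z)) \<le> c"
        by blast
      then show ?case using \<delta>(2) by force
    qed
    then have "\<forall>\<^sub>F n in sequentially. \<forall>z\<in>E. \<forall>x\<ge>0.
        invertible_mat (Y0 (A n \<omega>) z + complex_of_real (x\<^sup>2) \<cdot>\<^sub>m 1\<^sub>m n) \<and> trn (G (A n \<omega>) z (x\<^sup>2)) \<noteq> 1"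
      using carrier \<omega> by (intro eventually_trn_G_ne_one[OF _ E(1) I rate]) auto
    then show "\<exists>n0. \<forall>n\<ge>n0. \<forall>z\<in>E. \<forall>x\<ge>0.
        invertible_mat (Y0 (A n \<omega>) z + complex_of_real (x\<^sup>2) \<cdot>\<^sub>m 1\<^sub>m n) \<and> trn (G (A n \<omega>) z (x\<^sup>2)) \<noteq> 1"
      unfolding eventually_sequentially by blast
  qed
qed

lemma not_in_Dset_obtain_null_ball:
  assumes "z \<notin> Dset nu"
  obtains e where "0 < e" "measure (nu z) (ball 0 e) = 0" "(\<integral>l. 1 / l \<partial>nu z) < 1"
proof -
  have "z \<notin> sigma0 nu" using assms unfolding Dset_def by auto
  then obtain e where "0 < e" "\<not> 0 < measure (nu z) (ball 0 e)"
    unfolding sigma0_def msupp_def by auto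
  moreover have "(\<integral>l. 1 / l \<partial>nu z) < 1" using assms \<open>z \<notin> sigma0 nu\<close> unfolding Dset_def by auto
  moreover have "measure (nu z) (ball 0 e) \<ge> 0" by (rule measure_nonneg)
  ultimately show ?thesis using that by (simp add: not_less)
qed

lemma integral_inverse_shift_roots_outside_Dset:
  assumes nu_z: "prob_space (nu z)" "sets (nu z) = sets borel" "emeasure (nu z) {0..} = 1"
    and z: "z \<notin> closure (Dset nu)" and eps: "0 < \<epsilon>"
  shows "(\<exists>!x. 0 < x \<and> 1 - (\<integral>l. 1 / (l + x\<^sup>2) \<partial>nu z) = \<epsilon> / x) \<and>
      (\<forall>x\<ge>0. (\<integral>l. 1 / (l + x\<^sup>2) \<partial>nu z) \<noteq> 1)"
proof -
  have "z \<notin> Dset nu" using z closure_subset[of "Dset nu"] by blast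
  then obtain e where e: "0 < e" "measure (nu z) (ball 0 e) = 0" and I: "(\<integral>l. 1 / l \<partial>nu z) < 1"
    by (rule not_in_Dset_obtain_null_ball)
  have AE: "AE l in nu z. e \<le> l" by (rule AE_ge_of_null_ball[OF nu_z e(2)])
  show ?thesis
    using integral_inverse_shift_unique_positive_root[OF nu_z(1,2) e(1) AE eps]
      integral_inverse_shift_ne_one[OF nu_z(1,2) e(1) AE I] by blast
qed

theorem proposition6:
  fixes M :: "'w measure" and A :: "nat \<Rightarrow> 'w \<Rightarrow> complex mat"
    and nu :: "complex \<Rightarrow> real measure" and \<epsilon> :: real
  assumes M: "prob_space M"
    and carrier: "\<forall>n. \<forall>\<omega>\<in>space M. A n \<omega> \<in> carrier_mat n n"
    and nu: "\<forall>z. prob_space (nu z) \<and> sets (nu z) = sets borel \<and> emeasure (nu z) {0..} = 1"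
    and C1: "AE z in lborel. AE \<omega> in M. weak_conv_m (\<lambda>n. emp_meas (A n \<omega>) z) (nu z)"
    and C2: "\<exists>K d. K > 0 \<and> d > 0 \<and> (\<forall>n\<ge>1.
              \<P>(\<omega> in M. (\<Sum>i<n. \<Sum>j<n. (cmod (A n \<omega> $$ (i, j)))\<^sup>2) / real n < K)
                \<ge> 1 - real n powr (-1 - d))"
    and C3: "\<exists>d0>0. \<exists>d>0. \<forall>e>0. \<exists>C. \<forall>n\<ge>1.
              \<P>(\<omega> in M. \<exists>c < C * real n powr (- d0). \<forall>z. z \<notin> sigma_nbhd nu e \<longrightarrow>
                  invertible_mat (Y0 (A n \<omega>) z) \<and>
                  cmod (trn (G (A n \<omega>) z 0) - complex_of_real (\<integral>l. 1 / l \<partial>nu z)) \<le> c)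
                > 1 - real n powr (-1 - d)"
    and C4: "\<exists>d1>0. \<exists>\<rho>0>0. \<exists>e0>0. \<exists>d>0. \<forall>n\<ge>1.
              \<P>(\<omega> in M. \<exists>c > 1 + d1. \<forall>z\<in>sigma_nbhd nu e0.
                  Re (trn (G (A n \<omega>) z (\<rho>0\<^sup>2))) \<ge> c)
                > 1 - real n powr (-1 - d)"
    and eps: "\<epsilon> > 0"
  shows "(\<forall>z. z \<notin> closure (Dset nu) \<longrightarrow>
            (\<forall>n. \<forall>\<omega>\<in>space M. \<exists>!x. x > 0 \<and>
               1 - trn (G (A n \<omega>) z (x\<^sup>2)) = complex_of_real (\<epsilon> / x)) \<and>
            (\<exists>!x. x > 0 \<and> 1 - (\<integral>l. 1 / (l + x\<^sup>2) \<partial>nu z) = \<epsilon> / x) \<and>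
            (\<forall>x\<ge>0. (\<integral>l. 1 / (l + x\<^sup>2) \<partial>nu z) \<noteq> 1)) \<and>
         (\<forall>E. compact E \<and> E \<inter> closure (Dset nu) = {} \<longrightarrow>
            (AE \<omega> in M. \<exists>n0. \<forall>n\<ge>n0. \<forall>z\<in>E. \<forall>x\<ge>(0::real).
               invertible_mat (Y0 (A n \<omega>) z + complex_of_real (x\<^sup>2) \<cdot>\<^sub>m 1\<^sub>m n) \<and>
               trn (G (A n \<omega>) z (x\<^sup>2)) \<noteq> 1))"
proof (rule conjI; intro allI impI)
  \<comment> \<open>Only (C3) enters.\<close>
  fix z assume z: "z \<notin> closure (Dset nu)"
  have nu_z: "prob_space (nu z)" "sets (nu z) = sets borel" "emeasure (nu z) {0..} = 1"
    using nu by auto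
  have "A n \<omega> \<in> carrier_mat n n" if "\<omega> \<in> space M" for n \<omega> using carrier that by blast
  then have "\<forall>n. \<forall>\<omega>\<in>space M. \<exists>!x. x > 0 \<and>
      1 - trn (G (A n \<omega>) z (x\<^sup>2)) = complex_of_real (\<epsilon> / x)"
    by (intro allI ballI trn_G_unique_positive_root[OF _ eps])
  then show "(\<forall>n. \<forall>\<omega>\<in>space M. \<exists>!x. x > 0 \<and>
      1 - trn (G (A n \<omega>) z (x\<^sup>2)) = complex_of_real (\<epsilon> / x)) \<and>
    (\<exists>!x. x > 0 \<and> 1 - (\<integral>l. 1 / (l + x\<^sup>2) \<partial>nu z) = \<epsilon> / x) \<and>
    (\<forall>x\<ge>0. (\<integral>l. 1 / (l + x\<^sup>2) \<partial>nu z) \<noteq> 1)"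
    using integral_inverse_shift_roots_outside_Dset[OF nu_z z eps] by (intro conjI) auto
next
  fix E assume "compact E \<and> E \<inter> closure (Dset nu) = {}"
  then show "AE \<omega> in M. \<exists>n0. \<forall>n\<ge>n0. \<forall>z\<in>E. \<forall>x\<ge>0.
      invertible_mat (Y0 (A n \<omega>) z + complex_of_real (x\<^sup>2) \<cdot>\<^sub>m 1\<^sub>m n) \<and> trn (G (A n \<omega>) z (x\<^sup>2)) \<noteq> 1"
    by (elim conjE) (rule AE_eventually_trn_G_ne_one[OF M carrier C3])
qed

end
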